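(* For every natural number $n$ and all $x,y,z\in\mathbb{R}$ such that $\sin\frac{x+y+2z}{2}$, $\sin\frac{x+y-2z}{2}$, $\sin\frac{x-y+2z}{2}$, $\sin\frac{x-y-2z}{2}$ are all nonzero, $$\Upsilon_n(x,y,z):=\sum_{j=0}^{n}\sin((j+1)x)\sin((j+1)y)\sin((2n-2j+3)z)$$ equals $$\frac{\cos\frac{x-y+(8+4n)z}{2}}{8\sin\frac{x-y-2z}{2}}-\frac{\cos\frac{(2n+3)(x-y)+4z}{2}}{8\sin\frac{x-y-2z}{2}}+\frac{\cos\frac{(2n+3)(x-y)-4z}{2}}{8\sin\frac{x-y+2z}{2}}-\frac{\cos\frac{x-y-(8+4n)z}{2}}{8\sin\frac{x-y+2z}{2}}$$ $$+\frac{\cos\frac{(2n+3)(x+y)+4z}{2}}{8\sin\frac{x+y-2z}{2}}-\frac{\cos\frac{x+y+(8+4n)z}{2}}{8\sin\frac{x+y-2z}{2}}+\frac{\cos\frac{x+y-(8+4n)z}{2}}{8\sin\frac{x+y+2z}{2}}-\frac{\cos\frac{(2n+3)(x+y)-4z}{2}}{8\sin\frac{x+y+2z}{2}}.$$ *)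

theory Defs
  imports Complex_Main
begin

definition Upsilon :: "nat \<Rightarrow> real \<Rightarrow> real \<Rightarrow> real \<Rightarrow> real" where
  "Upsilon n x y z = (\<Sum>j=0..n. sin (real (j+1) * x) * sin (real (j+1) * y)
      * sin ((2 * real n - 2 * real j + 3) * z))"

end

theory Submission
  imports Defs
begin

text \<open>
  By the product-to-sum formulas, \<open>sin (a x) sin (a y) = (cos (a (x - y)) - cos (a (x + y))) / 2\<close>
  and \<open>cos (a w) sin b = (sin (a w + b) + sin (b - a w)) / 2\<close>, so \<open>\<Upsilon>\<^sub>n\<close> splits into four
  sums of sines of arithmetic progressions, with differences \<open>\<plusminus>(x - y) - 2z\<close> and
  \<open>\<plusminus>(x + y) - 2z\<close>. Each of them telescopes after multiplication by twice the sine of half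
  the difference.
\<close>

lemma two_sin_half_mult_sin:
  fixes d B :: real
  shows "2 * sin (d/2) * sin B = cos (B - d/2) - cos (B + d/2)"
  using sin_times_sin[of B "d/2"] by (simp add: mult.commute)

lemma sum_sin_arith_prog_mult:
  fixes A d :: real
  shows "2 * sin (d/2) * (\<Sum>j=0..n. sin (A + real j * d))
           = cos (A - d/2) - cos (A + (real n + 1/2) * d)"
proof (induction n)
  case 0
  show ?case using two_sin_half_mult_sin[of d A] by simp
next
  case (Suc n)
  let ?B = "A + real (Suc n) * d"
  have lower: "?B - d/2 = A + (real n + 1/2) * d"
    and upper: "?B + d/2 = A + (real (Suc n) + 1/2) * d"
    by (simp_all add: algebra_simps)
  have "2 * sin (d/2) * sin ?B
          = cos (A + (real n + 1/2) * d) - cos (A + (real (Suc n) + 1/2) * d)"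
    using two_sin_half_mult_sin[of d ?B] by (simp only: lower upper)
  with Suc show ?case by (simp add: distrib_left)
qed

lemma sum_sin_arith_prog:
  fixes A d :: real
  assumes "sin (d/2) \<noteq> 0"
  shows "(\<Sum>j=0..n. sin (A + real j * d))
           = (cos (A - d/2) - cos (A + (real n + 1/2) * d)) / (2 * sin (d/2))"
  using sum_sin_arith_prog_mult[of d A n] assms by (simp add: field_simps)

lemma sum_sin_mixed_multiples:
  fixes w z :: real
  assumes "sin ((w - 2*z) / 2) \<noteq> 0"
  shows "(\<Sum>j=0..n. sin (real (j+1) * w + (2 * real n - 2 * real j + 3) * z))
           = (cos ((w + (8 + 4 * real n) * z) / 2) - cos (((2 * real n + 3) * w + 4*z) / 2))
             / (2 * sin ((w - 2*z) / 2))"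
proof -
  define A where "A = (2 * real n + 3) * z + w"
  define d where "d = w - 2*z"
  have terms: "real (j+1) * w + (2 * real n - 2 * real j + 3) * z = A + real j * d" for j
    unfolding A_def d_def by (simp add: algebra_simps)
  have first: "A - d/2 = (w + (8 + 4 * real n) * z) / 2"
    unfolding A_def d_def by (simp add: field_simps)
  have last: "A + (real n + 1/2) * d = ((2 * real n + 3) * w + 4*z) / 2"
    unfolding A_def d_def by (simp add: field_simps)
  have half_diff: "d/2 = (w - 2*z) / 2"
    unfolding d_def by simp
  have "(\<Sum>j=0..n. sin (real (j+1) * w + (2 * real n - 2 * real j + 3) * z))
          = (\<Sum>j=0..n. sin (A + real j * d))"
    by (simp only: terms)
  also have "\<dots> = (cos (A - d/2) - cos (A + (real n + 1/2) * d)) / (2 * sin (d/2))"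
    using assms half_diff by (intro sum_sin_arith_prog) simp
  finally show ?thesis
    unfolding first last by (simp only: half_diff)
qed

lemma sum_cos_sin_mixed_multiples:
  fixes w z :: real
  assumes "sin ((w - 2*z) / 2) \<noteq> 0" and "sin ((w + 2*z) / 2) \<noteq> 0"
  shows "(\<Sum>j=0..n. cos (real (j+1) * w) * sin ((2 * real n - 2 * real j + 3) * z))
      = cos ((w + (8 + 4 * real n) * z) / 2) / (4 * sin ((w - 2*z) / 2))
      - cos (((2 * real n + 3) * w + 4*z) / 2) / (4 * sin ((w - 2*z) / 2))
      + cos (((2 * real n + 3) * w - 4*z) / 2) / (4 * sin ((w + 2*z) / 2))
      - cos ((w - (8 + 4 * real n) * z) / 2) / (4 * sin ((w + 2*z) / 2))"
proof -
  let ?T = "\<lambda>w. \<Sum>j=0..n. sin (real (j+1) * w + (2 * real n - 2 * real j + 3) * z)"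
  have product_to_sum: "cos (real (j+1) * w) * sin ((2 * real n - 2 * real j + 3) * z)
          = (sin (real (j+1) * w + (2 * real n - 2 * real j + 3) * z)
             + sin (real (j+1) * (- w) + (2 * real n - 2 * real j + 3) * z)) / 2" for j
    using sin_times_cos[of "(2 * real n - 2 * real j + 3) * z" "real (j+1) * w"]
    by (simp add: algebra_simps)
  have split: "(\<Sum>j=0..n. cos (real (j+1) * w) * sin ((2 * real n - 2 * real j + 3) * z))
               = (?T w + ?T (- w)) / 2"
    by (simp only: product_to_sum sum_divide_distrib[symmetric] sum.distrib)
  have sin_neg: "sin ((- w - 2*z) / 2) = - sin ((w + 2*z) / 2)"
    using sin_minus[of "(w + 2*z) / 2"] by (simp add: minus_divide_left)
  have cos_first: "cos ((- w + (8 + 4 * real n) * z) / 2) = cos ((w - (8 + 4 * real n) * z) / 2)"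
    using cos_minus[of "(w - (8 + 4 * real n) * z) / 2"] by (simp add: minus_divide_left)
  have cos_last: "cos (((2 * real n + 3) * - w + 4*z) / 2) = cos (((2 * real n + 3) * w - 4*z) / 2)"
    using cos_minus[of "((2 * real n + 3) * w - 4*z) / 2"] by (simp add: minus_divide_left algebra_simps)
  have neg_nonzero: "sin ((- w - 2*z) / 2) \<noteq> 0"
    using sin_neg assms(2) by simp
  have T_neg: "?T (- w) = (cos (((2 * real n + 3) * w - 4*z) / 2)
      - cos ((w - (8 + 4 * real n) * z) / 2)) / (2 * sin ((w + 2*z) / 2))"
    using sum_sin_mixed_multiples[OF neg_nonzero, of n] unfolding sin_neg cos_first cos_last
    by (simp only: mult_minus_right divide_minus_right minus_divide_left minus_diff_eq)
  show ?thesis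
    unfolding split sum_sin_mixed_multiples[OF assms(1)] T_neg using assms
    by (simp add: field_simps)
qed

theorem lemma11:
  fixes n :: nat and x y z :: real
  assumes "sin ((x + y + 2*z) / 2) \<noteq> 0"
      and "sin ((x + y - 2*z) / 2) \<noteq> 0"
      and "sin ((x - y + 2*z) / 2) \<noteq> 0"
      and "sin ((x - y - 2*z) / 2) \<noteq> 0"
  shows "Upsilon n x y z =
      cos ((x - y + (8 + 4 * real n) * z) / 2) / (8 * sin ((x - y - 2*z) / 2))
    - cos (((2 * real n + 3) * (x - y) + 4*z) / 2) / (8 * sin ((x - y - 2*z) / 2))
    + cos (((2 * real n + 3) * (x - y) - 4*z) / 2) / (8 * sin ((x - y + 2*z) / 2))
    - cos ((x - y - (8 + 4 * real n) * z) / 2) / (8 * sin ((x - y + 2*z) / 2))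
    + cos (((2 * real n + 3) * (x + y) + 4*z) / 2) / (8 * sin ((x + y - 2*z) / 2))
    - cos ((x + y + (8 + 4 * real n) * z) / 2) / (8 * sin ((x + y - 2*z) / 2))
    + cos ((x + y - (8 + 4 * real n) * z) / 2) / (8 * sin ((x + y + 2*z) / 2))
    - cos (((2 * real n + 3) * (x + y) - 4*z) / 2) / (8 * sin ((x + y + 2*z) / 2))"
proof -
  let ?C = "\<lambda>w. \<Sum>j=0..n. cos (real (j+1) * w) * sin ((2 * real n - 2 * real j + 3) * z)"
  have product_to_sum: "sin (real (j+1) * x) * sin (real (j+1) * y) * s
          = (cos (real (j+1) * (x - y)) * s - cos (real (j+1) * (x + y)) * s) / 2" for j s
    by (simp add: sin_times_sin algebra_simps)
  have "Upsilon n x y z = (?C (x - y) - ?C (x + y)) / 2"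
    unfolding Upsilon_def
    by (simp only: product_to_sum sum_divide_distrib[symmetric] sum_subtractf)
  then show ?thesis
    using sum_cos_sin_mixed_multiples[of "x - y" z n] sum_cos_sin_mixed_multiples[of "x + y" z n] assms
    by (simp add: diff_divide_distrib add_divide_distrib)
qed

end
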